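(* Let $g_1(s),\dots,g_n(s)$ and $f(s)$ be rational transfer functions such that there is $\gamma>0$ with $\mathrm{Re}(g_i(s))\ge\frac1\gamma|g_i(s)|^2$ for all $\mathrm{Re}(s)>0$ and all $i$, and $f$ is positive real ($\mathrm{Re}(f(s))>0$ for $\mathrm{Re}(s)>0$, $\mathrm{Im}(f(s))=0$ for $\mathrm{Re}(s)=0$). Then for any $V_k\in\mathbb{R}^{n\times k}$ with $V_k^TV_k=I$ and any symmetric $\Lambda_k\succeq0$, the transfer matrix $$T(s)=V_k\big(V_k^T\mathrm{diag}\{g_i^{-1}(s)\}V_k+f(s)\Lambda_k\big)^{-1}V_k^T$$ satisfies $\|T(s)\|_{\mathcal{H}_\infty}\le\gamma$.
   Context: $\|T\|_{\mathcal{H}_\infty}=\sup_{\mathrm{Re}(s)>0}\|T(s)\|$, with $\|\cdot\|$ the spectral norm. *)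

theory Defs
  imports "HOL-Analysis.Analysis" "HOL-Computational_Algebra.Polynomial"
begin

text \<open>A (real-)rational transfer function: a quotient of two polynomials with real
  coefficients, the denominator not identically zero (division by zero gives 0).\<close>
definition rational_tf :: "(complex \<Rightarrow> complex) \<Rightarrow> bool" where
  "rational_tf g \<longleftrightarrow> (\<exists>p q :: complex poly. q \<noteq> 0 \<and>
      (\<forall>j. coeff p j \<in> \<real>) \<and> (\<forall>j. coeff q j \<in> \<real>) \<and>
      (\<forall>s. g s = poly p s / poly q s))"

definition positive_real_tf :: "(complex \<Rightarrow> complex) \<Rightarrow> bool" where
  "positive_real_tf f \<longleftrightarrow> (\<forall>s. Re s > 0 \<longrightarrow> Re (f s) > 0) \<and> (\<forall>s. Re s = 0 \<longrightarrow> Im (f s) = 0)"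

definition spectral_norm :: "complex^'n^'m \<Rightarrow> real" where
  "spectral_norm A = onorm (\<lambda>x. A *v x)"

definition cmat :: "real^'n^'m \<Rightarrow> complex^'n^'m" where
  "cmat A = (\<chi> i j. complex_of_real (A $ i $ j))"

definition transfer_T :: "('n \<Rightarrow> complex \<Rightarrow> complex) \<Rightarrow> (complex \<Rightarrow> complex)
    \<Rightarrow> real^'k^'n \<Rightarrow> real^'k^'k \<Rightarrow> complex \<Rightarrow> complex^'n^'n" where
  "transfer_T g f V L s =
     cmat V ** matrix_inv (cmat (transpose V) ** (\<chi> i j. if i = j then inverse (g i s) else 0) ** cmat V
                           + (\<chi> i j. f s * (cmat L) $ i $ j))
     ** cmat (transpose V)"

text \<open>H-infinity norm: supremum of the spectral norm over the open right half-plane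
  (restricted to points where all g_i(s) are nonzero, i.e. where the formula is defined;
  the rational matrix extends continuously).\<close>

end

theory Submission
  imports Defs
begin

text \<open>Write \<open>h\<^sub>i = 1/g\<^sub>i\<close>: the hypothesis on \<open>g\<^sub>i\<close> says exactly \<open>Re h\<^sub>i(s) \<ge> 1/\<gamma>\<close>. Hence
  \<open>M = V\<^sup>T diag(h) V + f(s) \<Lambda>\<close> is coercive, \<open>Re \<langle>z, M z\<rangle> \<ge> |z|\<^sup>2/\<gamma>\<close>: the first
  summand because \<open>V\<close> is an isometry, the second because \<open>\<langle>z, \<Lambda> z\<rangle>\<close> is real and
  nonnegative while \<open>Re f(s) > 0\<close>. A coercive matrix is invertible, and for \<open>M z = V\<^sup>T y\<close>
  one gets \<open>|z|\<^sup>2/\<gamma> \<le> Re \<langle>V z, y\<rangle> \<le> |z| |y|\<close>, so \<open>|T y| = |V z| = |z| \<le> \<gamma> |y|\<close>.\<close>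

definition cinner :: "complex^'n \<Rightarrow> complex^'n \<Rightarrow> complex" where
  "cinner x y = (\<Sum>i\<in>UNIV. cnj (x$i) * y$i)"

definition diag_mat :: "('n \<Rightarrow> 'a::zero) \<Rightarrow> 'a^'n^'n" where
  "diag_mat h = (\<chi> i j. if i = j then h i else 0)"

definition coercive :: "real \<Rightarrow> complex^'n^'n \<Rightarrow> bool" where
  "coercive c M \<longleftrightarrow> (\<forall>z. c * (norm z)\<^sup>2 \<le> Re (cinner z (M *v z)))"

lemma Re_cinner: "Re (cinner x y) = x \<bullet> y"
  by (simp add: cinner_def inner_vec_def inner_complex_def Re_sum)

lemma cinner_add_right: "cinner x (y + w) = cinner x y + cinner x w"
  by (simp add: cinner_def distrib_left sum.distrib)

lemma cinner_zero_right [simp]: "cinner x 0 = 0"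
  by (simp add: cinner_def)

lemma cinner_scaled_matrix: "cinner x ((\<chi> i j. a * A$i$j) *v y) = a * cinner x (A *v y)"
  by (simp add: cinner_def matrix_vector_mult_def sum_distrib_left mult_ac)

lemma cinner_cmat_transpose:
  fixes V :: "real^'k::finite^'n::finite"
  shows "cinner z (cmat (transpose V) *v y) = cinner (cmat V *v z) y"
proof -
  have "cinner z (cmat (transpose V) *v y) = (\<Sum>j\<in>UNIV. \<Sum>i\<in>UNIV. cnj (z$j) * (of_real (V$i$j) * y$i))"
    by (simp add: cinner_def cmat_def matrix_vector_mult_def transpose_def sum_distrib_left)
  also have "\<dots> = (\<Sum>i\<in>UNIV. \<Sum>j\<in>UNIV. cnj (z$j) * (of_real (V$i$j) * y$i))"
    by (rule sum.swap)
  also have "\<dots> = cinner (cmat V *v z) y"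
    by (simp add: cinner_def cmat_def matrix_vector_mult_def cnj_sum sum_distrib_left
        sum_distrib_right mult_ac)
  finally show ?thesis .
qed

lemma cmat_matrix_mult: "cmat (A ** B) = cmat A ** cmat B"
  by (simp add: cmat_def matrix_matrix_mult_def vec_eq_iff)

lemma cmat_mat_1: "cmat (mat 1) = mat 1"
  by (simp add: cmat_def mat_def vec_eq_iff)

lemma norm_cmat_isometry:
  fixes V :: "real^'k::finite^'n::finite"
  assumes "transpose V ** V = mat 1"
  shows "norm (cmat V *v z) = norm z"
proof -
  have "(norm (cmat V *v z))\<^sup>2 = Re (cinner (cmat V *v z) (cmat V *v z))"
    by (simp add: Re_cinner power2_norm_eq_inner)
  also have "\<dots> = Re (cinner z ((cmat (transpose V) ** cmat V) *v z))"
    by (simp add: cinner_cmat_transpose flip: matrix_vector_mul_assoc)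
  also have "\<dots> = (norm z)\<^sup>2"
    by (simp add: assms cmat_mat_1 Re_cinner power2_norm_eq_inner flip: cmat_matrix_mult)
  finally show ?thesis
    by (simp add: power2_eq_iff_nonneg)
qed

lemma diag_mat_mult_vector: "diag_mat h *v u = (\<chi> i. h i * u$i)"
proof -
  have "(\<Sum>j\<in>UNIV. (if i = j then h i else 0) * u$j) = h i * u$i" for i
  proof -
    have "(\<Sum>j\<in>UNIV. (if i = j then h i else 0) * u$j) = (\<Sum>j\<in>UNIV. if i = j then h i * u$j else 0)"
      by (rule sum.cong) auto
    then show ?thesis
      by simp
  qed
  then show ?thesis
    by (simp add: diag_mat_def matrix_vector_mult_def vec_eq_iff)
qed

lemma Re_cinner_diag_mat_ge:
  assumes "\<And>i. c \<le> Re (h i)"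
  shows "c * (norm u)\<^sup>2 \<le> Re (cinner u (diag_mat h *v u))"
proof -
  have Re_term: "Re (cnj a * (b * a)) = Re b * (cmod a)\<^sup>2" for a b :: complex
    unfolding cmod_power2 by (simp add: algebra_simps power2_eq_square)
  have "c * (norm u)\<^sup>2 = (\<Sum>i\<in>UNIV. c * (cmod (u$i))\<^sup>2)"
    by (simp add: norm_vec_def L2_set_def sum_nonneg sum_distrib_left)
  also have "\<dots> \<le> (\<Sum>i\<in>UNIV. Re (h i) * (cmod (u$i))\<^sup>2)"
    by (intro sum_mono mult_right_mono assms) simp
  also have "\<dots> = Re (cinner u (diag_mat h *v u))"
    by (simp only: cinner_def diag_mat_mult_vector vec_lambda_beta Re_sum Re_term)
  finally show ?thesis .
qed

lemma Im_cinner_cmat_symmetric: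
  fixes L :: "real^'k::finite^'k"
  assumes "transpose L = L"
  shows "Im (cinner z (cmat L *v z)) = 0"
proof -
  define a b where "a = (\<chi> j. Re (z$j))" and "b = (\<chi> j. Im (z$j))"
  have "b \<bullet> (L *v a) = (b v* L) \<bullet> a"
    by (rule dot_lmul_matrix[symmetric])
  also have "\<dots> = a \<bullet> (L *v b)"
    by (metis assms inner_commute transpose_matrix_vector)
  finally have "b \<bullet> (L *v a) = a \<bullet> (L *v b)" .
  moreover have "Im (cinner z (cmat L *v z)) = a \<bullet> (L *v b) - b \<bullet> (L *v a)"
    by (simp add: a_def b_def cinner_def cmat_def inner_vec_def matrix_vector_mult_def Im_sum
        sum_distrib_left algebra_simps flip: sum_subtractf)
  ultimately show ?thesis
    by simp
qed

lemma Re_cinner_cmat_nonneg: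
  fixes L :: "real^'k::finite^'k"
  assumes "\<And>x. x \<bullet> (L *v x) \<ge> 0"
  shows "Re (cinner z (cmat L *v z)) \<ge> 0"
proof -
  define a b where "a = (\<chi> j. Re (z$j))" and "b = (\<chi> j. Im (z$j))"
  have "Re (cinner z (cmat L *v z)) = a \<bullet> (L *v a) + b \<bullet> (L *v b)"
    by (simp add: a_def b_def cinner_def cmat_def inner_vec_def matrix_vector_mult_def Re_sum
        sum_distrib_left algebra_simps flip: sum.distrib)
  then show ?thesis
    using assms by (simp add: add_nonneg_nonneg)
qed

lemma Re_inverse_ge:
  fixes w :: complex
  assumes "w \<noteq> 0" and "c * (cmod w)\<^sup>2 \<le> Re w"
  shows "c \<le> Re (inverse w)"
proof -
  have "Re (inverse w) = Re w / (cmod w)\<^sup>2"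
    by (simp add: cmod_power2)
  moreover have "(cmod w)\<^sup>2 > 0"
    using assms(1) by simp
  ultimately show ?thesis
    using assms(2) by (simp only: pos_le_divide_eq)
qed

lemma coercive_compressed_diag_plus_psd:
  fixes V :: "real^'k::finite^'n::finite" and L :: "real^'k^'k"
  assumes "\<And>i. c \<le> Re (h i)" and "Re a \<ge> 0"
    and "transpose V ** V = mat 1"
    and "transpose L = L" and "\<And>x. x \<bullet> (L *v x) \<ge> 0"
  shows "coercive c (cmat (transpose V) ** diag_mat h ** cmat V + (\<chi> i j. a * cmat L $ i $ j))"
  unfolding coercive_def
proof
  fix z
  have "c * (norm z)\<^sup>2 = c * (norm (cmat V *v z))\<^sup>2"
    by (simp add: norm_cmat_isometry assms(3))
  also have "\<dots> \<le> Re (cinner (cmat V *v z) (diag_mat h *v (cmat V *v z)))"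
    by (rule Re_cinner_diag_mat_ge) (rule assms(1))
  also have "\<dots> \<le> \<dots> + Re (a * cinner z (cmat L *v z))"
    using Im_cinner_cmat_symmetric[OF assms(4)] Re_cinner_cmat_nonneg[OF assms(5)] assms(2)
    by simp
  also have "\<dots> = Re (cinner z ((cmat (transpose V) ** diag_mat h ** cmat V
                   + (\<chi> i j. a * cmat L $ i $ j)) *v z))"
    by (simp add: matrix_vector_mult_add_rdistrib cinner_add_right cinner_scaled_matrix
        cinner_cmat_transpose flip: matrix_vector_mul_assoc)
  finally show "c * (norm z)\<^sup>2 \<le> Re (cinner z ((cmat (transpose V) ** diag_mat h ** cmat V
                   + (\<chi> i j. a * cmat L $ i $ j)) *v z))" .
qed

lemma invertible_if_coercive:
  assumes "coercive c M" and "c > 0"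
  shows "invertible M"
proof -
  have "z = 0" if "M *v z = 0" for z
  proof -
    have "c * (norm z)\<^sup>2 \<le> Re (cinner z (M *v z))"
      using assms(1) by (simp add: coercive_def)
    then have "c * (norm z)\<^sup>2 \<le> 0"
      using that by simp
    then show "z = 0"
      using assms(2) by (simp add: mult_le_0_iff)
  qed
  then show ?thesis
    by (simp add: invertible_left_inverse matrix_left_invertible_ker)
qed

lemma matrix_inv_right:
  assumes "invertible M"
  shows "M ** matrix_inv M = mat 1"
  using assms unfolding invertible_def matrix_inv_def by (rule someI_ex[THEN conjunct1])

lemma spectral_norm_compressed_inverse_le:
  fixes V :: "real^'k::finite^'n::finite"
  assumes "transpose V ** V = mat 1" and "coercive c M" and "c > 0"
  shows "spectral_norm (cmat V ** matrix_inv M ** cmat (transpose V)) \<le> 1 / c"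
  unfolding spectral_norm_def
proof (rule onorm_le)
  fix y :: "complex^'n"
  define z where "z = matrix_inv M *v (cmat (transpose V) *v y)"
  have Mz: "M *v z = cmat (transpose V) *v y"
    using matrix_inv_right[OF invertible_if_coercive[OF assms(2,3)]]
    by (simp add: z_def matrix_vector_mul_assoc matrix_mul_assoc)
  have norm_Vz: "norm (cmat V *v z) = norm z"
    by (rule norm_cmat_isometry[OF assms(1)])
  have "c * (norm z)\<^sup>2 \<le> Re (cinner z (M *v z))"
    using assms(2) by (simp add: coercive_def)
  also have "\<dots> = (cmat V *v z) \<bullet> y"
    by (simp add: Mz cinner_cmat_transpose Re_cinner)
  also have "\<dots> \<le> norm z * norm y"
    using norm_cauchy_schwarz norm_Vz by metis
  finally have "norm z * (c * norm z) \<le> norm z * norm y"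
    by (simp add: power2_eq_square mult_ac)
  then have "c * norm z \<le> norm y"
    by (cases "norm z = 0") (use assms(3) in \<open>auto simp: mult_le_cancel_left\<close>)
  then have "norm z \<le> 1 / c * norm y"
    using assms(3) by (simp add: field_simps)
  moreover have "(cmat V ** matrix_inv M ** cmat (transpose V)) *v y = cmat V *v z"
    by (simp add: z_def flip: matrix_vector_mul_assoc)
  ultimately show "norm ((cmat V ** matrix_inv M ** cmat (transpose V)) *v y) \<le> 1 / c * norm y"
    by (simp add: norm_Vz)
qed

theorem lemma5:
  fixes g :: "'n::finite \<Rightarrow> complex \<Rightarrow> complex"
    and f :: "complex \<Rightarrow> complex"
    and \<gamma> :: real
    and V :: "real^'k::finite^'n"
    and L :: "real^'k^'k"
  assumes "\<gamma> > 0"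
    and "\<And>i. rational_tf (g i)"
    and "\<And>i s. Re s > 0 \<Longrightarrow> Re (g i s) \<ge> (1 / \<gamma>) * (cmod (g i s))\<^sup>2"
    and "rational_tf f"
    and "positive_real_tf f"
    and "transpose V ** V = mat 1"
    and "transpose L = L"
    and "\<And>x. x \<bullet> (L *v x) \<ge> 0"
  shows "\<forall>s. Re s > 0 \<and> (\<forall>i. g i s \<noteq> 0) \<longrightarrow> spectral_norm (transfer_T g f V L s) \<le> \<gamma>"
proof (intro allI impI)
  fix s assume s: "Re s > 0 \<and> (\<forall>i. g i s \<noteq> 0)"
  have "Re (f s) \<ge> 0"
    using assms(5) s by (simp add: positive_real_tf_def less_imp_le)
  moreover have "1 / \<gamma> \<le> Re (inverse (g i s))" for i
    using s assms(3) by (intro Re_inverse_ge) auto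
  ultimately have "coercive (1 / \<gamma>) (cmat (transpose V) ** diag_mat (\<lambda>i. inverse (g i s)) ** cmat V
      + (\<chi> i j. f s * cmat L $ i $ j))"
    using assms(6-8) by (intro coercive_compressed_diag_plus_psd)
  from spectral_norm_compressed_inverse_le[OF assms(6) this] assms(1)
  show "spectral_norm (transfer_T g f V L s) \<le> \<gamma>"
    by (simp add: transfer_T_def diag_mat_def)
qed

end
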